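(* Let $x$ be an allocation rule and suppose Assumptions D and X hold. (The following is part (ii) of the proposition; part (i) is attributed to prior work.) Suppose $\bar t$ is a win-lose dependent transfer rule (for $x$) such that for every $i$ and $\theta\in\Theta$, $$\bar U_i^{\min}(\theta)=\int_{\underline\theta}^{\theta}X_i^{\min}(z)\,dz,$$ where $\bar U_i^{\min}$ denotes the interim worst-case utility under $(x,\bar t)$. Then $(x,\bar t)$ is feasible.
   Context: Let $\Theta=[\underline\theta,\bar\theta]\subset\mathbb{R}$ with $0<\underline\theta<\bar\theta$, with Borel $\sigma$-algebra $\mathcal{B}$; "$\sigma$-algebra" always means a sub-$\sigma$-algebra of $\mathcal{B}$, and $\Delta(\Theta,\mathcal{A})$ is the set of probability measures on $(\Theta,\mathcal{A})$; $P_{\mathcal{E}}$ denotes the restriction of $P$ to $\mathcal{E}$. A divergence $D$ assigns to each pair $Q,P$ of probability measures on a common $\sigma$-algebra a number $D(Q\|P)\in[0,\infty]$. Assumption D: for every $\sigma$-algebra $\mathcal{A}$ and $P,Q\in\Delta(\Theta,\mathcal{A})$: (D1) $D(Q\|P)=0$ if $Q=P$; (D2) if $Q\ll P$ and $dQ/dP$ is bounded, $\epsilon\mapsto D(\epsilon Q+(1-\epsilon)P\|P)$ is continuous on $[0,1]$; (D3) $D(Q\|P)<\infty$ implies $Q\ll P$; (D4) $D(Q_{\mathcal{E}}\|P_{\mathcal{E}})\le D(Q\|P)$ for every sub-$\sigma$-algebra $\mathcal{E}\subset\mathcal{A}$; (D5) $D(Q_{\mathcal{E}}\|P_{\mathcal{E}})=D(Q\|P)$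 if $dQ_{\mathcal{E}}/dP_{\mathcal{E}}=dQ/dP$ $P$-a.e. Fix an atomless $P\in\Delta(\Theta,\mathcal{B})$ and $\eta>0$. Two bidders $i\in\{1,2\}$. An allocation rule is a bounded measurable $x=(x_1,x_2):\Theta^2\to\mathbb{R}^2$ with $x_1(\theta,\theta')\ge0$, $x_2(\theta',\theta)\ge0$, $x_1(\theta,\theta')+x_2(\theta',\theta)\le1$; a transfer rule is a bounded measurable $t=(t_1,t_2):\Theta^2\to\mathbb{R}^2$. Define $X_i(\theta)=\int x_i(\theta,\theta')dP(\theta')$, $X_i^{\min}(\theta)=\inf_Q\{\int x_i(\theta,\theta')dQ(\theta'):D(Q\|P)\le\eta\}$, and for a transfer rule $t$, $U_i^{\min}(\theta)=\inf_Q\{\int[\theta x_i(\theta,\theta')-t_i(\theta,\theta')]dQ(\theta'):D(Q\|P)\le\eta\}$, $Q$ ranging over $\Delta(\Theta,\mathcal{B})$. $(x,t)$ is incentive compatible if for all $i,\theta$, $\theta\in\arg\max_{\hat\theta\in\Theta}\inf_Q\{\int[\theta x_i(\hat\theta,\theta')-t_i(\hat\theta,\theta')]dQ(\theta'):D(Q\|P)\le\eta\}$; individually rational if $U_i^{\min}(\theta)\ge0$ for all $i,\theta$; feasible if both. Assumption X: (i) $x_i(\theta,\theta')\in\{0,1\}$ for $\theta'\ne\theta$; (ii) $X_i(\theta)=1$ implies $\theta=\bar\theta$; (iii) $X_i^{\min}$ is non-decreasing. A transfer rule $t$ is win-lose dependent if there exist $t_i^w,t_i^l:\Theta\to\mathbb{R}$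 with $t_i(\theta,\theta')=t_i^w(\theta)x_i(\theta,\theta')+t_i^l(\theta)[1-x_i(\theta,\theta')]$ and $\theta-t_i^w(\theta)\ge-t_i^l(\theta)$ for all $i,\theta,\theta'$. *)

theory Defs
  imports "HOL-Probability.Probability"
begin

definition BTheta :: "real \<Rightarrow> real \<Rightarrow> real set set" where
  "BTheta lo hi = sets (restrict_space borel {lo..hi})"

(* a sigma-algebra in the paper's sense: a sub-sigma-algebra of the Borel sets of Theta *)
definition sub_borel :: "real \<Rightarrow> real \<Rightarrow> real set set \<Rightarrow> bool" where
  "sub_borel lo hi F \<longleftrightarrow> sigma_algebra {lo..hi} F \<and> F \<subseteq> BTheta lo hi"

definition prob_on :: "real \<Rightarrow> real \<Rightarrow> real set set \<Rightarrow> real measure \<Rightarrow> bool" where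
  "prob_on lo hi F M \<longleftrightarrow> prob_space M \<and> space M = {lo..hi} \<and> sets M = F"

definition restr :: "real measure \<Rightarrow> real set set \<Rightarrow> real measure" where
  "restr M E = measure_of (space M) E (emeasure M)"

definition mix :: "real \<Rightarrow> real measure \<Rightarrow> real measure \<Rightarrow> real measure" where
  "mix e Q P = measure_of (space P) (sets P)
      (\<lambda>A. ennreal e * emeasure Q A + ennreal (1 - e) * emeasure P A)"

definition assumption_D :: "real \<Rightarrow> real \<Rightarrow> (real measure \<Rightarrow> real measure \<Rightarrow> ennreal) \<Rightarrow> bool" where
  "assumption_D lo hi D \<longleftrightarrow>
    (\<forall>A P Q. sub_borel lo hi A \<longrightarrow> prob_on lo hi A P \<longrightarrow> prob_on lo hi A Q \<longrightarrow>
      (Q = P \<longrightarrow> D Q P = 0) \<and>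
      ((absolutely_continuous P Q \<and> (\<exists>B::real. AE w in P. RN_deriv P Q w \<le> ennreal B))
         \<longrightarrow> continuous_on {0..1} (\<lambda>e. D (mix e Q P) P)) \<and>
      (D Q P < \<infinity> \<longrightarrow> absolutely_continuous P Q) \<and>
      (\<forall>E. sub_borel lo hi E \<longrightarrow> E \<subseteq> A \<longrightarrow> D (restr Q E) (restr P E) \<le> D Q P) \<and>
      (\<forall>E. sub_borel lo hi E \<longrightarrow> E \<subseteq> A \<longrightarrow> absolutely_continuous P Q \<longrightarrow>
          (AE w in P. RN_deriv (restr P E) (restr Q E) w = RN_deriv P Q w) \<longrightarrow>
          D (restr Q E) (restr P E) = D Q P))"

definition bdd_meas2 :: "real \<Rightarrow> real \<Rightarrow> (real \<Rightarrow> real \<Rightarrow> real) \<Rightarrow> bool" where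
  "bdd_meas2 lo hi f \<longleftrightarrow>
     (\<lambda>(a, b). f a b) \<in> borel_measurable (restrict_space borel {lo..hi} \<Otimes>\<^sub>M restrict_space borel {lo..hi})
     \<and> (\<exists>B. \<forall>a\<in>{lo..hi}. \<forall>b\<in>{lo..hi}. \<bar>f a b\<bar> \<le> B)"

(* allocation rule for bidders 1,2; x i \<theta> \<theta>' = x_i(own type, other's type) *)
definition allocation_rule :: "real \<Rightarrow> real \<Rightarrow> (nat \<Rightarrow> real \<Rightarrow> real \<Rightarrow> real) \<Rightarrow> bool" where
  "allocation_rule lo hi x \<longleftrightarrow>
     (\<forall>i\<in>{1,2}. bdd_meas2 lo hi (x i)) \<and>
     (\<forall>a\<in>{lo..hi}. \<forall>b\<in>{lo..hi}. x 1 a b \<ge> 0 \<and> x 2 b a \<ge> 0 \<and> x 1 a b + x 2 b a \<le> 1)"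

definition transfer_rule :: "real \<Rightarrow> real \<Rightarrow> (nat \<Rightarrow> real \<Rightarrow> real \<Rightarrow> real) \<Rightarrow> bool" where
  "transfer_rule lo hi t \<longleftrightarrow> (\<forall>i\<in>{1,2}. bdd_meas2 lo hi (t i))"

definition amb :: "real \<Rightarrow> real \<Rightarrow> (real measure \<Rightarrow> real measure \<Rightarrow> ennreal) \<Rightarrow> real measure \<Rightarrow> real \<Rightarrow> real measure set" where
  "amb lo hi D P \<eta> = {Q. prob_on lo hi (BTheta lo hi) Q \<and> D Q P \<le> ennreal \<eta>}"

definition Xint :: "real measure \<Rightarrow> (nat \<Rightarrow> real \<Rightarrow> real \<Rightarrow> real) \<Rightarrow> nat \<Rightarrow> real \<Rightarrow> real" where
  "Xint P x i \<theta> = (\<integral>\<theta>'. x i \<theta> \<theta>' \<partial>P)"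

definition Xmin :: "real \<Rightarrow> real \<Rightarrow> (real measure \<Rightarrow> real measure \<Rightarrow> ennreal) \<Rightarrow> real measure \<Rightarrow> real
     \<Rightarrow> (nat \<Rightarrow> real \<Rightarrow> real \<Rightarrow> real) \<Rightarrow> nat \<Rightarrow> real \<Rightarrow> real" where
  "Xmin lo hi D P \<eta> x i \<theta> = (INF Q \<in> amb lo hi D P \<eta>. (\<integral>\<theta>'. x i \<theta> \<theta>' \<partial>Q))"

(* worst-case utility of type \<theta> reporting \<theta>h *)
definition Vmin :: "real \<Rightarrow> real \<Rightarrow> (real measure \<Rightarrow> real measure \<Rightarrow> ennreal) \<Rightarrow> real measure \<Rightarrow> real
     \<Rightarrow> (nat \<Rightarrow> real \<Rightarrow> real \<Rightarrow> real) \<Rightarrow> (nat \<Rightarrow> real \<Rightarrow> real \<Rightarrow> real) \<Rightarrow> nat \<Rightarrow> real \<Rightarrow> real \<Rightarrow> real" where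
  "Vmin lo hi D P \<eta> x t i \<theta> \<theta>h =
     (INF Q \<in> amb lo hi D P \<eta>. (\<integral>\<theta>'. \<theta> * x i \<theta>h \<theta>' - t i \<theta>h \<theta>' \<partial>Q))"

definition Umin :: "real \<Rightarrow> real \<Rightarrow> (real measure \<Rightarrow> real measure \<Rightarrow> ennreal) \<Rightarrow> real measure \<Rightarrow> real
     \<Rightarrow> (nat \<Rightarrow> real \<Rightarrow> real \<Rightarrow> real) \<Rightarrow> (nat \<Rightarrow> real \<Rightarrow> real \<Rightarrow> real) \<Rightarrow> nat \<Rightarrow> real \<Rightarrow> real" where
  "Umin lo hi D P \<eta> x t i \<theta> =
     (INF Q \<in> amb lo hi D P \<eta>. (\<integral>\<theta>'. \<theta> * x i \<theta> \<theta>' - t i \<theta> \<theta>' \<partial>Q))"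

definition incentive_compatible where
  "incentive_compatible lo hi D P \<eta> x t \<longleftrightarrow>
     (\<forall>i\<in>{1,2::nat}. \<forall>\<theta>\<in>{lo..hi}. \<forall>\<theta>h\<in>{lo..hi}.
        Vmin lo hi D P \<eta> x t i \<theta> \<theta>h \<le> Vmin lo hi D P \<eta> x t i \<theta> \<theta>)"

definition individually_rational where
  "individually_rational lo hi D P \<eta> x t \<longleftrightarrow>
     (\<forall>i\<in>{1,2::nat}. \<forall>\<theta>\<in>{lo..hi}. Umin lo hi D P \<eta> x t i \<theta> \<ge> 0)"

definition feasible where
  "feasible lo hi D P \<eta> x t \<longleftrightarrow>
     incentive_compatible lo hi D P \<eta> x t \<and> individually_rational lo hi D P \<eta> x t"

definition assumption_X where
  "assumption_X lo hi D P \<eta> x \<longleftrightarrow>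
     (\<forall>i\<in>{1,2::nat}.
        (\<forall>\<theta>\<in>{lo..hi}. \<forall>\<theta>'\<in>{lo..hi}. \<theta>' \<noteq> \<theta> \<longrightarrow> x i \<theta> \<theta>' \<in> {0, 1}) \<and>
        (\<forall>\<theta>\<in>{lo..hi}. Xint P x i \<theta> = 1 \<longrightarrow> \<theta> = hi) \<and>
        mono_on {lo..hi} (Xmin lo hi D P \<eta> x i))"

definition win_lose_dependent where
  "win_lose_dependent lo hi x t \<longleftrightarrow>
     (\<exists>tw tl :: nat \<Rightarrow> real \<Rightarrow> real. \<forall>i\<in>{1,2::nat}. \<forall>\<theta>\<in>{lo..hi}. \<forall>\<theta>'\<in>{lo..hi}.
        t i \<theta> \<theta>' = tw i \<theta> * x i \<theta> \<theta>' + tl i \<theta> * (1 - x i \<theta> \<theta>') \<and>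
        \<theta> - tw i \<theta> \<ge> - tl i \<theta>)"

end

theory Submission imports Defs begin

(* Under win-lose dependent transfers the payoff of reporting a against a
   conjecture Q is affine in the winning probability of a under Q, so the worst case over
   the ambiguity set is an affine function of Xmin a when the slope is non-negative (as it
   is for the truthful type theta = a) and is bounded by it otherwise. This yields the envelope inequality
     Vmin theta a <= Umin a + (theta - a) Xmin a.
   With Umin a = integral of Xmin over [lo, a] and Xmin monotone, the right-hand side is a
   tangent of the convex function theta |-> integral of Xmin over [lo, theta], hence lies
   below Umin theta: this is incentive compatibility. Individual rationality is the
   non-negativity of that integral. *)

lemma cInf_affine_image:
  fixes S :: "real set"
  assumes "S \<noteq> {}" "bdd_below S" "0 \<le> m"
  shows "Inf ((\<lambda>u. m * u + k) ` S) = m * Inf S + k"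
  using continuous_at_Inf_mono[of "\<lambda>u. m * u + k" S] assms
  by (simp add: mono_def mult_left_mono continuous_intros)

lemma cInf_affine_image_le:
  fixes S :: "real set"
  assumes "S \<noteq> {}" "bdd_below S" "bdd_above S"
  shows "Inf ((\<lambda>u. m * u + k) ` S) \<le> m * Inf S + k"
proof (cases "0 \<le> m")
  case True
  then show ?thesis using cInf_affine_image[OF assms(1,2)] by simp
next
  case False
  obtain u where u: "u \<in> S" using assms(1) by auto
  obtain B where B: "\<And>v. v \<in> S \<Longrightarrow> v \<le> B" using assms(3) by (auto simp: bdd_above_def)
  have "bdd_below ((\<lambda>u. m * u + k) ` S)"
    using False B by (intro bdd_belowI2[of _ "m * B + k"]) (auto intro: mult_left_mono_neg)
  then have "Inf ((\<lambda>u. m * u + k) ` S) \<le> m * u + k"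
    using u by (intro cInf_lower) auto
  also have "\<dots> \<le> m * Inf S + k"
    using False cInf_lower[OF u assms(2)] by (simp add: mult_left_mono_neg)
  finally show ?thesis .
qed

lemma mono_on_integral_above_tangent:
  fixes f :: "real \<Rightarrow> real"
  assumes mono: "mono_on {lo..hi} f" and a: "a \<in> {lo..hi}" and b: "b \<in> {lo..hi}"
  shows "integral {lo..a} f + (b - a) * f a \<le> integral {lo..b} f"
proof -
  have int: "f integrable_on {c..d}" if "{c..d} \<subseteq> {lo..hi}" for c d
    using integrable_subinterval_real[OF integrable_on_mono_on[OF mono] that] .
  show ?thesis
  proof (cases "a \<le> b")
    case True
    have "integral {a..b} (\<lambda>_. f a) \<le> integral {a..b} f"
      using int[of a b] a b mono by (intro integral_le) (auto simp: mono_on_def)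
    moreover have "integral {lo..a} f + integral {a..b} f = integral {lo..b} f"
      using a b True by (intro Henstock_Kurzweil_Integration.integral_combine int) auto
    ultimately show ?thesis using True by simp
  next
    case False
    have "integral {b..a} f \<le> integral {b..a} (\<lambda>_. f a)"
      using int[of b a] a b mono by (intro integral_le) (auto simp: mono_on_def)
    moreover have "integral {lo..b} f + integral {b..a} f = integral {lo..a} f"
      using a b False by (intro Henstock_Kurzweil_Integration.integral_combine int) auto
    ultimately show ?thesis using False by (simp add: algebra_simps)
  qed
qed

lemma sub_borel_BTheta: "sub_borel lo hi (BTheta lo hi)"
  unfolding sub_borel_def BTheta_def
  using sets.sigma_algebra_axioms[of "restrict_space borel {lo..hi}"]
  by (simp add: sigma_algebra_def)

lemma prior_in_amb:
  assumes "assumption_D lo hi D" "prob_on lo hi (BTheta lo hi) P" "0 \<le> \<eta>"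
  shows "P \<in> amb lo hi D P \<eta>"
proof -
  have "D P P = 0"
    using assms(1,2) sub_borel_BTheta[of lo hi] unfolding assumption_D_def by blast
  then show ?thesis using assms(2,3) unfolding amb_def by simp
qed

lemma integrable_bdd_meas2_section:
  assumes f: "bdd_meas2 lo hi f" and Q: "prob_on lo hi (BTheta lo hi) Q" and a: "a \<in> {lo..hi}"
  shows "integrable Q (f a)"
proof -
  interpret prob_space Q using Q by (simp add: prob_on_def)
  obtain B where B: "\<And>a b. a \<in> {lo..hi} \<Longrightarrow> b \<in> {lo..hi} \<Longrightarrow> \<bar>f a b\<bar> \<le> B"
    using f unfolding bdd_meas2_def by blast
  have "(\<lambda>(a, b). f a b) \<in> borel_measurable (restrict_space borel {lo..hi} \<Otimes>\<^sub>M restrict_space borel {lo..hi})"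
    using f unfolding bdd_meas2_def by blast
  from measurable_Pair2[OF this, of a] a
  have "f a \<in> borel_measurable Q"
    using Q by (simp add: prob_on_def BTheta_def cong: measurable_cong_sets)
  then show ?thesis
    using B a Q by (intro integrable_const_bound[where B = B]) (auto simp: prob_on_def)
qed

lemma allocation_rule_unit:
  assumes "allocation_rule lo hi x" "i \<in> {1, 2}" "a \<in> {lo..hi}" "b \<in> {lo..hi}"
  shows "0 \<le> x i a b \<and> x i a b \<le> 1"
  using assms unfolding allocation_rule_def by fastforce

definition win_probs where
  "win_probs lo hi D P \<eta> x i a = (\<lambda>Q. \<integral>\<theta>'. x i a \<theta>' \<partial>Q) ` amb lo hi D P \<eta>"

lemma Xmin_eq_Inf_win_probs: "Xmin lo hi D P \<eta> x i a = Inf (win_probs lo hi D P \<eta> x i a)"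
  unfolding Xmin_def win_probs_def image_image ..

lemma win_probs_subset_unit:
  assumes "allocation_rule lo hi x" "i \<in> {1, 2}" "a \<in> {lo..hi}"
  shows "win_probs lo hi D P \<eta> x i a \<subseteq> {0..1}"
proof
  fix w assume "w \<in> win_probs lo hi D P \<eta> x i a"
  then obtain Q where Q: "prob_on lo hi (BTheta lo hi) Q" and w: "w = (\<integral>b. x i a b \<partial>Q)"
    unfolding win_probs_def amb_def by auto
  interpret prob_space Q using Q by (simp add: prob_on_def)
  have unit: "\<And>b. b \<in> space Q \<Longrightarrow> 0 \<le> x i a b \<and> x i a b \<le> 1"
    using allocation_rule_unit[OF assms] Q by (auto simp: prob_on_def)
  have "integrable Q (x i a)"
    using assms Q by (intro integrable_bdd_meas2_section) (auto simp: allocation_rule_def)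
  then have "(\<integral>b. x i a b \<partial>Q) \<le> (\<integral>b. 1 \<partial>Q)"
    using unit by (intro integral_mono) auto
  moreover have "0 \<le> (\<integral>b. x i a b \<partial>Q)"
    using unit by (intro Bochner_Integration.integral_nonneg) auto
  ultimately show "w \<in> {0..1}" using w prob_space by simp
qed

lemma Vmin_eq_Inf_affine_win_probs:
  assumes x: "allocation_rule lo hi x" and i: "i \<in> {1, 2}" and a: "a \<in> {lo..hi}"
    and t: "\<And>b. b \<in> {lo..hi} \<Longrightarrow> t i a b = t_win * x i a b + t_lose * (1 - x i a b)"
  shows "Vmin lo hi D P \<eta> x t i \<theta> a
           = Inf ((\<lambda>u. (\<theta> - t_win + t_lose) * u - t_lose) ` win_probs lo hi D P \<eta> x i a)"
proof -
  have "(\<integral>b. \<theta> * x i a b - t i a b \<partial>Q) = (\<theta> - t_win + t_lose) * (\<integral>b. x i a b \<partial>Q) - t_lose"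
    if "Q \<in> amb lo hi D P \<eta>" for Q
  proof -
    have Q: "prob_on lo hi (BTheta lo hi) Q" using that by (simp add: amb_def)
    interpret prob_space Q using Q by (simp add: prob_on_def)
    have "integrable Q (x i a)"
      using x i integrable_bdd_meas2_section[OF _ Q a] by (auto simp: allocation_rule_def)
    have "(\<integral>b. \<theta> * x i a b - t i a b \<partial>Q) = (\<integral>b. (\<theta> - t_win + t_lose) * x i a b - t_lose \<partial>Q)"
      using t Q by (intro Bochner_Integration.integral_cong) (auto simp: prob_on_def algebra_simps)
    also have "\<dots> = (\<theta> - t_win + t_lose) * (\<integral>b. x i a b \<partial>Q) - t_lose"
      using \<open>integrable Q (x i a)\<close> by (simp add: prob_space)
    finally show ?thesis .
  qed
  then show ?thesis
    unfolding Vmin_def win_probs_def image_image by (intro arg_cong[where f = Inf] image_cong) auto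
qed

lemma Vmin_le_Umin_plus_Xmin:
  assumes D: "assumption_D lo hi D" and P: "prob_on lo hi (BTheta lo hi) P" and "0 \<le> \<eta>"
    and x: "allocation_rule lo hi x" and t: "win_lose_dependent lo hi x t"
    and i: "i \<in> {1, 2}" and a: "a \<in> {lo..hi}"
  shows "Vmin lo hi D P \<eta> x t i \<theta> a
           \<le> Umin lo hi D P \<eta> x t i a + (\<theta> - a) * Xmin lo hi D P \<eta> x i a"
proof -
  obtain t_win t_lose
    where transfers: "\<And>b. b \<in> {lo..hi} \<Longrightarrow> t i a b = t_win * x i a b + t_lose * (1 - x i a b)"
    and slope: "0 \<le> a - t_win + t_lose"
    using t i a unfolding win_lose_dependent_def by (metis add.commute diff_ge_0_iff_ge diff_minus_eq_add)
  define W where "W = win_probs lo hi D P \<eta> x i a"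
  have W: "W \<noteq> {}" "bdd_below W" "bdd_above W"
  proof -
    show "W \<noteq> {}" using prior_in_amb[OF D P \<open>0 \<le> \<eta>\<close>] by (auto simp: W_def win_probs_def)
    have "W \<subseteq> {0..1}" unfolding W_def by (rule win_probs_subset_unit[OF x i a])
    then show "bdd_below W" "bdd_above W" by (auto intro: bdd_below_mono bdd_above_mono)
  qed
  have V: "Vmin lo hi D P \<eta> x t i \<theta>' a = Inf ((\<lambda>u. (\<theta>' - t_win + t_lose) * u - t_lose) ` W)" for \<theta>'
    unfolding W_def by (rule Vmin_eq_Inf_affine_win_probs[where t = t, OF x i a transfers])
  have "Vmin lo hi D P \<eta> x t i \<theta> a \<le> (\<theta> - t_win + t_lose) * Inf W - t_lose"
    using V cInf_affine_image_le[OF W, of "\<theta> - t_win + t_lose" "- t_lose"] by simp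
  moreover have "Umin lo hi D P \<eta> x t i a = (a - t_win + t_lose) * Inf W - t_lose"
    using V[of a] cInf_affine_image[OF W(1,2) slope, of "- t_lose"] by (simp add: Umin_def Vmin_def)
  ultimately show ?thesis by (simp add: Xmin_eq_Inf_win_probs W_def algebra_simps)
qed

lemma Xmin_nonneg:
  assumes "assumption_D lo hi D" "prob_on lo hi (BTheta lo hi) P" "0 \<le> \<eta>"
    and "allocation_rule lo hi x" "i \<in> {1, 2}" "a \<in> {lo..hi}"
  shows "0 \<le> Xmin lo hi D P \<eta> x i a"
proof -
  have "win_probs lo hi D P \<eta> x i a \<subseteq> {0..1}"
    by (rule win_probs_subset_unit[OF assms(4-6)])
  then show ?thesis
    unfolding Xmin_eq_Inf_win_probs using prior_in_amb[OF assms(1-3)]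
    by (intro cInf_greatest) (auto simp: win_probs_def)
qed

lemma individually_rational_if_Umin_eq_integral:
  assumes "assumption_D lo hi D" "prob_on lo hi (BTheta lo hi) P" "0 \<le> \<eta>"
    and "allocation_rule lo hi x" "assumption_X lo hi D P \<eta> x"
    and envelope: "\<forall>i\<in>{1,2}. \<forall>\<theta>\<in>{lo..hi}.
           Umin lo hi D P \<eta> x t i \<theta> = integral {lo..\<theta>} (Xmin lo hi D P \<eta> x i)"
  shows "individually_rational lo hi D P \<eta> x t"
  unfolding individually_rational_def
proof (intro ballI)
  fix i :: nat and \<theta> assume i: "i \<in> {1, 2}" and \<theta>: "\<theta> \<in> {lo..hi}"
  have "mono_on {lo..hi} (Xmin lo hi D P \<eta> x i)"
    using assms(5) i unfolding assumption_X_def by auto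
  then have "0 \<le> integral {lo..\<theta>} (Xmin lo hi D P \<eta> x i)"
    using integrable_subinterval_real[OF integrable_on_mono_on] \<theta> Xmin_nonneg[OF assms(1-4) i]
    by (intro integral_nonneg) auto
  then show "0 \<le> Umin lo hi D P \<eta> x t i \<theta>" using envelope i \<theta> by auto
qed

lemma incentive_compatible_if_Umin_eq_integral:
  assumes "assumption_D lo hi D" "prob_on lo hi (BTheta lo hi) P" "0 \<le> \<eta>"
    and "allocation_rule lo hi x" "assumption_X lo hi D P \<eta> x" "win_lose_dependent lo hi x t"
    and envelope: "\<forall>i\<in>{1,2}. \<forall>\<theta>\<in>{lo..hi}.
           Umin lo hi D P \<eta> x t i \<theta> = integral {lo..\<theta>} (Xmin lo hi D P \<eta> x i)"
  shows "incentive_compatible lo hi D P \<eta> x t"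
  unfolding incentive_compatible_def
proof (intro ballI)
  fix i :: nat and \<theta> a assume i: "i \<in> {1, 2}" and \<theta>: "\<theta> \<in> {lo..hi}" and a: "a \<in> {lo..hi}"
  have mono: "mono_on {lo..hi} (Xmin lo hi D P \<eta> x i)"
    using assms(5) i unfolding assumption_X_def by auto
  have "Vmin lo hi D P \<eta> x t i \<theta> a
          \<le> Umin lo hi D P \<eta> x t i a + (\<theta> - a) * Xmin lo hi D P \<eta> x i a"
    by (rule Vmin_le_Umin_plus_Xmin[OF assms(1-4,6) i a])
  also have "\<dots> \<le> Umin lo hi D P \<eta> x t i \<theta>"
    using mono_on_integral_above_tangent[OF mono a \<theta>] envelope i a \<theta> by auto
  finally show "Vmin lo hi D P \<eta> x t i \<theta> a \<le> Vmin lo hi D P \<eta> x t i \<theta> \<theta>"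
    by (simp add: Umin_def Vmin_def)
qed

theorem proposition1:
  fixes lo hi \<eta> :: real and P :: "real measure"
    and D :: "real measure \<Rightarrow> real measure \<Rightarrow> ennreal"
    and x t :: "nat \<Rightarrow> real \<Rightarrow> real \<Rightarrow> real"
  assumes "0 < lo" and "lo < hi" and "0 < \<eta>"
    and "prob_on lo hi (BTheta lo hi) P"
    and "\<forall>a. emeasure P {a} = 0"
    and "assumption_D lo hi D"
    and "allocation_rule lo hi x"
    and "assumption_X lo hi D P \<eta> x"
    and "transfer_rule lo hi t"
    and "win_lose_dependent lo hi x t"
    and "\<forall>i\<in>{1,2}. \<forall>\<theta>\<in>{lo..hi}.
           Umin lo hi D P \<eta> x t i \<theta> = integral {lo..\<theta>} (Xmin lo hi D P \<eta> x i)"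
  shows "feasible lo hi D P \<eta> x t"
proof -
  have "0 \<le> \<eta>" using assms(3) by simp
  then show ?thesis
    unfolding feasible_def
    using individually_rational_if_Umin_eq_integral[OF assms(6,4) _ assms(7,8,11)]
      incentive_compatible_if_Umin_eq_integral[OF assms(6,4) _ assms(7,8,10,11)]
    by blast
qed

end
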